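(* Let $A=(a_{ij})\in\mathcal{B}^{m,n}$ and let $k$ be a field. Let $k[A]=k[x_{ij} : a_{ij}=1]$, let $A[x]$ be the matrix over $k[A]$ with $A[x]_{ij}=x_{ij}$ if $a_{ij}=1$ and $0$ otherwise, and let $I_2(A[x])$ be the ideal of $k[A]$ generated by the $2\times2$ minors of $A[x]$. Let $\Delta_A$ be the simplicial complex on the vertex set $\{a_{ij} : a_{ij}=1\}$ whose faces are the isolated sets of $A$, and let $I_{\Delta_A}\subseteq k[A]$ be its Stanley–Reisner ideal, i.e. the ideal generated by the monomials $\prod_{a_{ij}\in S}x_{ij}$ for all subsets $S$ of the vertices with $S\notin\Delta_A$. Then \[ I_{\Delta_A}=\big(x_{ij}x_{k\ell} : (i,j)\neq(k,\ell),\ a_{ij}=a_{k\ell}=1,\ x_{ij}x_{k\ell}\notin I_2(A[x])\big). \]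
   Context: $\mathcal{B}^{m,n}$ denotes $m\times n$ matrices with entries in the Boolean semiring $\{0,1\}$ with $\vee$ (or), $\wedge$ (and). A pair of entries $\{a_{ij},a_{k\ell}\}$ is isolated if $a_{ij}=a_{k\ell}=1$ and $a_{i\ell}\wedge a_{kj}=0$. A subset $T$ of the entries of $A$ equal to $1$ is an isolated set if it has size one or every pair of its elements is isolated (the empty set is also a face of $\Delta_A$). *)

theory Defs
  imports Main "HOL-Library.Poly_Mapping"
begin

text \<open>Boolean m x n matrices are represented by A :: nat => nat => bool, with
  entries A i j for i < m, j < n (A i j = True means a_ij = 1).\<close>

type_synonym 'k mpoly = "((nat \<times> nat) \<Rightarrow>\<^sub>0 nat) \<Rightarrow>\<^sub>0 'k"

definition ones :: "nat \<Rightarrow> nat \<Rightarrow> (nat \<Rightarrow> nat \<Rightarrow> bool) \<Rightarrow> (nat \<times> nat) set" where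
  "ones m n A = {(i, j). i < m \<and> j < n \<and> A i j}"

definition isolated_pair :: "(nat \<Rightarrow> nat \<Rightarrow> bool) \<Rightarrow> nat \<times> nat \<Rightarrow> nat \<times> nat \<Rightarrow> bool" where
  "isolated_pair A p q = (case p of (i, j) \<Rightarrow> case q of (k, l) \<Rightarrow>
      A i j \<and> A k l \<and> \<not> (A i l \<and> A k j))"

definition isolated_set :: "nat \<Rightarrow> nat \<Rightarrow> (nat \<Rightarrow> nat \<Rightarrow> bool) \<Rightarrow> (nat \<times> nat) set \<Rightarrow> bool" where
  "isolated_set m n A T = (T \<subseteq> ones m n A \<and>
      (card T \<le> 1 \<or> (\<forall>p\<in>T. \<forall>q\<in>T. p \<noteq> q \<longrightarrow> isolated_pair A p q)))"

definition Var :: "nat \<times> nat \<Rightarrow> 'k::comm_ring_1 mpoly" where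
  "Var v = Poly_Mapping.single (Poly_Mapping.single v 1) 1"

definition kA :: "nat \<Rightarrow> nat \<Rightarrow> (nat \<Rightarrow> nat \<Rightarrow> bool) \<Rightarrow> 'k::comm_ring_1 mpoly set" where
  "kA m n A = {p. \<forall>mon \<in> Poly_Mapping.keys p. Poly_Mapping.keys mon \<subseteq> ones m n A}"

definition ideal_gen_in :: "'a::comm_ring_1 set \<Rightarrow> 'a set \<Rightarrow> 'a set" where
  "ideal_gen_in R G = {\<Sum>g\<in>F. c g * g | F c. finite F \<and> F \<subseteq> G \<and> (\<forall>g\<in>F. c g \<in> R)}"

definition Ax :: "(nat \<Rightarrow> nat \<Rightarrow> bool) \<Rightarrow> nat \<Rightarrow> nat \<Rightarrow> 'k::comm_ring_1 mpoly" where
  "Ax A i j = (if A i j then Var (i, j) else 0)"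

definition minors2 :: "nat \<Rightarrow> nat \<Rightarrow> (nat \<Rightarrow> nat \<Rightarrow> bool) \<Rightarrow> 'k::comm_ring_1 mpoly set" where
  "minors2 m n A = {Ax A i j * Ax A k l - Ax A i l * Ax A k j | i j k l.
      i < k \<and> k < m \<and> j < l \<and> l < n}"

definition I2 :: "nat \<Rightarrow> nat \<Rightarrow> (nat \<Rightarrow> nat \<Rightarrow> bool) \<Rightarrow> 'k::comm_ring_1 mpoly set" where
  "I2 m n A = ideal_gen_in (kA m n A) (minors2 m n A)"

definition SR_ideal :: "nat \<Rightarrow> nat \<Rightarrow> (nat \<Rightarrow> nat \<Rightarrow> bool) \<Rightarrow> 'k::comm_ring_1 mpoly set" where
  "SR_ideal m n A = ideal_gen_in (kA m n A)
     {\<Prod>s\<in>S. Var s | S. S \<subseteq> ones m n A \<and> \<not> isolated_set m n A S}"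

end

theory Submission imports Defs begin

text \<open>
  For 1-entries p, q the monomial x_p x_q lies in I_2(A[x]) exactly when the pair is isolated:
  for an isolated pair x_p x_q is, up to sign, a 2-minor of A[x]; otherwise all four corners of
  the rectangle spanned by p and q are 1-entries, and evaluating at the indicator point of that
  rectangle kills every 2-minor (the indicator matrix of a rectangle has rank one) but not
  x_p x_q. Since the isolated sets are exactly the sets of pairwise isolated 1-entries, Delta_A
  is a flag complex, so its Stanley-Reisner ideal is generated by the quadratic monomials of its
  non-edges.
\<close>

section \<open>Evaluation at a 0/1 point\<close>

definition extend_char :: "('m \<Rightarrow> 'k) \<Rightarrow> ('m \<Rightarrow>\<^sub>0 'k::comm_semiring_1) \<Rightarrow> 'k" where
  "extend_char w f = (\<Sum>M\<in>Poly_Mapping.keys f. Poly_Mapping.lookup f M * w M)"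

lemma poly_mapping_sum_single:
  "f = (\<Sum>M\<in>Poly_Mapping.keys f. Poly_Mapping.single M (Poly_Mapping.lookup f M))"
  by (rule poly_mapping_eqI)
     (auto simp: lookup_sum lookup_single when_def in_keys_iff sum.delta' split: if_splits)

lemma extend_char_add: "extend_char w (f + g) = extend_char w f + extend_char w g"
  unfolding extend_char_def by (rule setsum_keys_plus_distrib) (auto simp: algebra_simps)

lemma extend_char_zero [simp]: "extend_char w 0 = 0"
  by (simp add: extend_char_def)

lemma extend_char_sum: "extend_char w (sum h A) = (\<Sum>a\<in>A. extend_char w (h a))"
  by (induction A rule: infinite_finite_induct) (simp_all add: extend_char_add)

lemma extend_char_single: "extend_char w (Poly_Mapping.single M c) = c * w M"
  by (cases "c = 0") (auto simp: extend_char_def)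

lemma extend_char_mult:
  fixes w :: "'m::comm_monoid_add \<Rightarrow> 'k::comm_semiring_1"
  assumes char: "\<And>a b. w (a + b) = w a * w b"
  shows "extend_char w (f * g) = extend_char w f * extend_char w g"
proof -
  let ?f = "Poly_Mapping.lookup f" and ?g = "Poly_Mapping.lookup g"
  have "f * g = (\<Sum>a\<in>Poly_Mapping.keys f. Poly_Mapping.single a (?f a)) *
                (\<Sum>b\<in>Poly_Mapping.keys g. Poly_Mapping.single b (?g b))"
    using poly_mapping_sum_single[of f] poly_mapping_sum_single[of g] by simp
  also have "\<dots> = (\<Sum>a\<in>Poly_Mapping.keys f. \<Sum>b\<in>Poly_Mapping.keys g.
                     Poly_Mapping.single (a + b) (?f a * ?g b))"
    by (simp add: sum_product mult_single)
  finally have "extend_char w (f * g) = (\<Sum>a\<in>Poly_Mapping.keys f. \<Sum>b\<in>Poly_Mapping.keys g.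
                                        (?f a * w a) * (?g b * w b))"
    by (simp add: extend_char_sum extend_char_single char algebra_simps)
  then show ?thesis
    by (simp add: extend_char_def sum_product)
qed

lemma extend_char_diff:
  fixes f g :: "'m \<Rightarrow>\<^sub>0 'k::comm_ring_1"
  shows "extend_char w (f - g) = extend_char w f - extend_char w g"
  using extend_char_add[of w "f - g" g] by simp

definition eval_indicator :: "'v set \<Rightarrow> (('v \<Rightarrow>\<^sub>0 nat) \<Rightarrow>\<^sub>0 'k::comm_semiring_1) \<Rightarrow> 'k" where
  "eval_indicator T = extend_char (\<lambda>M. of_bool (Poly_Mapping.keys M \<subseteq> T))"

lemma keys_add_poly_mapping_nat:
  "Poly_Mapping.keys (a + b :: 'v \<Rightarrow>\<^sub>0 nat) = Poly_Mapping.keys a \<union> Poly_Mapping.keys b"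
  by (auto simp: in_keys_iff lookup_add)

lemma eval_indicator_mult: "eval_indicator T (f * g) = eval_indicator T f * eval_indicator T g"
  unfolding eval_indicator_def
  by (rule extend_char_mult) (auto simp: keys_add_poly_mapping_nat)

lemma eval_indicator_zero [simp]: "eval_indicator T 0 = 0"
  by (simp add: eval_indicator_def)

lemma eval_indicator_sum: "eval_indicator T (sum h A) = (\<Sum>a\<in>A. eval_indicator T (h a))"
  unfolding eval_indicator_def by (rule extend_char_sum)

lemma eval_indicator_diff:
  "eval_indicator T (f - g) = eval_indicator T f - (eval_indicator T g :: 'k::comm_ring_1)"
  unfolding eval_indicator_def by (rule extend_char_diff)

lemma eval_indicator_Var: "eval_indicator T (Var v :: 'k::comm_ring_1 mpoly) = of_bool (v \<in> T)"
  by (simp add: eval_indicator_def Var_def extend_char_single)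

section \<open>Ideals generated inside a subring\<close>

definition subsemiring :: "'a::semiring_1 set \<Rightarrow> bool" where
  "subsemiring R \<longleftrightarrow> 0 \<in> R \<and> 1 \<in> R \<and> (\<forall>a\<in>R. \<forall>b\<in>R. a + b \<in> R \<and> a * b \<in> R)"

lemma subsemiring_prod:
  assumes "subsemiring R" "\<And>s. s \<in> S \<Longrightarrow> f s \<in> R"
  shows "prod f S \<in> R"
  using assms(2)
  by (induction S rule: infinite_finite_induct) (use assms(1) in \<open>auto simp: subsemiring_def\<close>)

lemma ideal_gen_inI:
  assumes "x = (\<Sum>g\<in>F. c g * g)" "finite F" "F \<subseteq> G" "\<And>g. g \<in> F \<Longrightarrow> c g \<in> R"
  shows "x \<in> ideal_gen_in R G"
  using assms unfolding ideal_gen_in_def by blast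

lemma ideal_gen_inE:
  assumes "x \<in> ideal_gen_in R G"
  obtains c F where "x = (\<Sum>g\<in>F. c g * g)" "finite F" "F \<subseteq> G" "\<And>g. g \<in> F \<Longrightarrow> c g \<in> R"
  using assms unfolding ideal_gen_in_def by blast

lemma generator_in_ideal_gen_in: "1 \<in> R \<Longrightarrow> g \<in> G \<Longrightarrow> g \<in> ideal_gen_in R G"
  unfolding ideal_gen_in_def by (auto intro!: exI[of _ "{g}"] exI[of _ "\<lambda>_. 1"])

lemma zero_in_ideal_gen_in: "0 \<in> ideal_gen_in R G"
  unfolding ideal_gen_in_def by (auto intro!: exI[of _ "{}"])

lemma ideal_gen_in_add:
  assumes R: "subsemiring R" and x: "x \<in> ideal_gen_in R G" and y: "y \<in> ideal_gen_in R G"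
  shows "x + y \<in> ideal_gen_in R G"
proof -
  obtain F1 c1 where x_repr: "x = (\<Sum>g\<in>F1. c1 g * g)" "finite F1" "F1 \<subseteq> G" "\<And>g. g \<in> F1 \<Longrightarrow> c1 g \<in> R"
    using x by (blast elim: ideal_gen_inE)
  obtain F2 c2 where y_repr: "y = (\<Sum>g\<in>F2. c2 g * g)" "finite F2" "F2 \<subseteq> G" "\<And>g. g \<in> F2 \<Longrightarrow> c2 g \<in> R"
    using y by (blast elim: ideal_gen_inE)
  define d1 where "d1 g = (if g \<in> F1 then c1 g else 0)" for g
  define d2 where "d2 g = (if g \<in> F2 then c2 g else 0)" for g
  have "x = (\<Sum>g\<in>F1 \<union> F2. d1 g * g)"
    unfolding x_repr(1) using x_repr(2) y_repr(2)
    by (intro sum.mono_neutral_cong_left) (auto simp: d1_def)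
  moreover have "y = (\<Sum>g\<in>F1 \<union> F2. d2 g * g)"
    unfolding y_repr(1) using x_repr(2) y_repr(2)
    by (intro sum.mono_neutral_cong_left) (auto simp: d2_def)
  ultimately have "x + y = (\<Sum>g\<in>F1 \<union> F2. (d1 g + d2 g) * g)"
    by (simp add: sum.distrib distrib_right)
  then show ?thesis
    by (rule ideal_gen_inI) (use x_repr y_repr R in \<open>auto simp: d1_def d2_def subsemiring_def\<close>)
qed

lemma ideal_gen_in_mult:
  assumes R: "subsemiring R" and r: "r \<in> R" and x: "x \<in> ideal_gen_in R G"
  shows "r * x \<in> ideal_gen_in R G"
proof -
  obtain F c where x_repr: "x = (\<Sum>g\<in>F. c g * g)" "finite F" "F \<subseteq> G" "\<And>g. g \<in> F \<Longrightarrow> c g \<in> R"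
    using x by (blast elim: ideal_gen_inE)
  have "r * x = (\<Sum>g\<in>F. (r * c g) * g)"
    using x_repr(1) by (simp add: sum_distrib_left mult.assoc)
  then show ?thesis
    by (rule ideal_gen_inI) (use x_repr R r in \<open>auto simp: subsemiring_def\<close>)
qed

lemma ideal_gen_in_uminus:
  assumes "\<And>a. a \<in> R \<Longrightarrow> - a \<in> R" and "x \<in> ideal_gen_in R G"
  shows "- x \<in> ideal_gen_in R G"
proof -
  obtain F c where x_repr: "x = (\<Sum>g\<in>F. c g * g)" "finite F" "F \<subseteq> G" "\<And>g. g \<in> F \<Longrightarrow> c g \<in> R"
    using assms(2) by (blast elim: ideal_gen_inE)
  then have "- x = (\<Sum>g\<in>F. (- c g) * g)"
    by (simp add: sum_negf)
  then show ?thesis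
    by (rule ideal_gen_inI) (use x_repr assms(1) in auto)
qed

lemma ideal_gen_in_subset:
  assumes R: "subsemiring R" and G: "G \<subseteq> ideal_gen_in R H"
  shows "ideal_gen_in R G \<subseteq> ideal_gen_in R H"
proof
  fix x assume "x \<in> ideal_gen_in R G"
  then obtain F c where x: "x = (\<Sum>g\<in>F. c g * g)" "finite F" "F \<subseteq> G" "\<And>g. g \<in> F \<Longrightarrow> c g \<in> R"
    by (blast elim: ideal_gen_inE)
  have "(\<Sum>g\<in>F. c g * g) \<in> ideal_gen_in R H"
    using x(2-4)
  proof (induction F rule: finite_induct)
    case empty
    then show ?case by (simp add: zero_in_ideal_gen_in)
  next
    case (insert g F)
    then have "c g * g \<in> ideal_gen_in R H"
      using G R by (intro ideal_gen_in_mult) auto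
    with insert show ?case
      using R by (simp add: ideal_gen_in_add)
  qed
  with x(1) show "x \<in> ideal_gen_in R H" by simp
qed

lemma ideal_gen_in_eqI:
  assumes "subsemiring R" "G \<subseteq> ideal_gen_in R H" "H \<subseteq> ideal_gen_in R G"
  shows "ideal_gen_in R G = ideal_gen_in R H"
  using ideal_gen_in_subset[OF assms(1)] assms(2,3) by blast

lemma eval_indicator_ideal_gen_in:
  assumes "\<And>g. g \<in> G \<Longrightarrow> eval_indicator T g = 0" and "x \<in> ideal_gen_in R G"
  shows "eval_indicator T x = 0"
proof -
  obtain F c where "x = (\<Sum>g\<in>F. c g * g)" "F \<subseteq> G"
    using assms(2) by (blast elim: ideal_gen_inE)
  with assms(1) show ?thesis
    by (auto simp: eval_indicator_sum eval_indicator_mult intro!: sum.neutral)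
qed

lemma ideal_gen_in_nonfaces_flag_complex:
  fixes f :: "'v \<Rightarrow> 'a::comm_ring_1"
  assumes R: "subsemiring R" and V: "finite V" and f: "\<And>v. v \<in> V \<Longrightarrow> f v \<in> R"
    and flag: "\<And>S. S \<subseteq> V \<Longrightarrow> face S \<longleftrightarrow> (\<forall>p\<in>S. \<forall>q\<in>S. p \<noteq> q \<longrightarrow> E p q)"
  shows "ideal_gen_in R {prod f S | S. S \<subseteq> V \<and> \<not> face S} =
         ideal_gen_in R {f p * f q | p q. p \<noteq> q \<and> p \<in> V \<and> q \<in> V \<and> \<not> E p q}"
    (is "ideal_gen_in R ?nonfaces = ideal_gen_in R ?nonedges")
proof (rule ideal_gen_in_eqI[OF R])
  have one: "1 \<in> R" using R by (simp add: subsemiring_def)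
  show "?nonfaces \<subseteq> ideal_gen_in R ?nonedges"
  proof
    fix x assume "x \<in> ?nonfaces"
    then obtain S where x: "x = prod f S" and S: "S \<subseteq> V" "\<not> face S" by blast
    then obtain p q where pq: "p \<in> S" "q \<in> S" "p \<noteq> q" "\<not> E p q"
      using flag by blast
    have "finite S" using S(1) V by (rule finite_subset)
    then have "x = prod f (S - {p, q}) * (f p * f q)"
      using x pq by (simp add: prod.subset_diff[of "{p, q}" S])
    moreover have "prod f (S - {p, q}) \<in> R"
      using S(1) f by (intro subsemiring_prod[OF R]) auto
    moreover have "f p * f q \<in> ideal_gen_in R ?nonedges"
      using pq S(1) by (intro generator_in_ideal_gen_in[OF one]) blast
    ultimately show "x \<in> ideal_gen_in R ?nonedges"
      by (simp add: ideal_gen_in_mult[OF R])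
  qed
  show "?nonedges \<subseteq> ideal_gen_in R ?nonfaces"
  proof
    fix x assume "x \<in> ?nonedges"
    then obtain p q where x: "x = f p * f q" and pq: "p \<noteq> q" "p \<in> V" "q \<in> V" "\<not> E p q"
      by blast
    then have "x = prod f {p, q}" "{p, q} \<subseteq> V" "\<not> face {p, q}"
      using flag[of "{p, q}"] by auto
    then show "x \<in> ideal_gen_in R ?nonfaces"
      by (intro generator_in_ideal_gen_in[OF one]) blast
  qed
qed

section \<open>The generic matrix of a Boolean matrix\<close>

lemma finite_ones: "finite (ones m n A)"
  by (rule finite_subset[of _ "{..<m} \<times> {..<n}"]) (auto simp: ones_def)

lemma subsemiring_kA: "subsemiring (kA m n A :: 'k::comm_ring_1 mpoly set)"
proof -
  have "p + q \<in> kA m n A" if "p \<in> kA m n A" "q \<in> kA m n A" for p q :: "'k mpoly"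
    using that keys_add[of p q] by (auto simp: kA_def)
  moreover have "p * q \<in> kA m n A" if "p \<in> kA m n A" "q \<in> kA m n A" for p q :: "'k mpoly"
    unfolding kA_def
  proof (intro CollectI ballI)
    fix M assume "M \<in> Poly_Mapping.keys (p * q)"
    then obtain a b where "M = a + b" "a \<in> Poly_Mapping.keys p" "b \<in> Poly_Mapping.keys q"
      using keys_mult[of p q] by blast
    with that show "Poly_Mapping.keys M \<subseteq> ones m n A"
      by (auto simp: kA_def keys_add_poly_mapping_nat)
  qed
  moreover have "0 \<in> kA m n A" "1 \<in> kA m n A"
    by (simp_all add: kA_def)
  ultimately show ?thesis
    by (simp add: subsemiring_def)
qed

lemma uminus_in_kA: "p \<in> kA m n A \<Longrightarrow> - p \<in> kA m n A"
  by (simp add: kA_def)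

lemma Var_in_kA: "s \<in> ones m n A \<Longrightarrow> (Var s :: 'k::comm_ring_1 mpoly) \<in> kA m n A"
  by (simp add: kA_def Var_def)

lemma minor_in_I2:
  assumes "i \<noteq> k" "j \<noteq> l" "i < m" "j < n" "k < m" "l < n"
  shows "(Ax A i j * Ax A k l - Ax A i l * Ax A k j :: 'k::comm_ring_1 mpoly) \<in> I2 m n A"
proof -
  have gen: "(Ax A i j * Ax A k l - Ax A i l * Ax A k j :: 'k mpoly) \<in> I2 m n A"
    if "i < k" "k < m" "j < l" "l < n" for i j k l
    using that unfolding I2_def minors2_def
    by (intro generator_in_ideal_gen_in) (auto simp: kA_def)
  have rows_ordered: "(Ax A i j * Ax A k l - Ax A i l * Ax A k j :: 'k mpoly) \<in> I2 m n A"
    if "i < k" "k < m" "j \<noteq> l" "j < n" "l < n" for i j k l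
  proof (cases "j < l")
    case True
    with that show ?thesis by (intro gen)
  next
    case False
    with that have "(Ax A i l * Ax A k j - Ax A i j * Ax A k l :: 'k mpoly) \<in> I2 m n A"
      by (intro gen) auto
    then have "- (Ax A i l * Ax A k j - Ax A i j * Ax A k l :: 'k mpoly) \<in> I2 m n A"
      unfolding I2_def by (rule ideal_gen_in_uminus[rotated]) (simp add: uminus_in_kA)
    then show ?thesis by simp
  qed
  show ?thesis
  proof (cases "i < k")
    case True
    with assms show ?thesis by (intro rows_ordered)
  next
    case False
    with assms have "(Ax A k l * Ax A i j - Ax A k j * Ax A i l :: 'k mpoly) \<in> I2 m n A"
      by (intro rows_ordered) auto
    then show ?thesis by (simp add: mult.commute)
  qed
qed

lemma eval_indicator_Ax:
  assumes "T \<subseteq> {(a, c). A a c}"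
  shows "eval_indicator T (Ax A a c :: 'k::comm_ring_1 mpoly) = of_bool ((a, c) \<in> T)"
  using assms by (auto simp: Ax_def eval_indicator_Var)

lemma eval_indicator_minors2_rectangle:
  assumes "rows \<times> cols \<subseteq> {(a, c). A a c}" and "g \<in> minors2 m n A"
  shows "eval_indicator (rows \<times> cols) g = (0 :: 'k::comm_ring_1)"
proof -
  from assms(2) obtain a c a' c' where "g = Ax A a c * Ax A a' c' - Ax A a c' * Ax A a' c"
    unfolding minors2_def by blast
  then show ?thesis
    by (simp add: eval_indicator_diff eval_indicator_mult eval_indicator_Ax[OF assms(1)])
qed

lemma Var_mult_Var_in_I2_iff:
  assumes p: "p \<in> ones m n A" and q: "q \<in> ones m n A"
  shows "(Var p * Var q :: 'k::comm_ring_1 mpoly) \<in> I2 m n A \<longleftrightarrow> isolated_pair A p q"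
proof -
  obtain i j k l where ij: "p = (i, j)" and kl: "q = (k, l)"
    by (cases p, cases q)
  have bounds: "i < m" "j < n" "k < m" "l < n" and ones: "A i j" "A k l"
    using p q by (auto simp: ij kl ones_def)
  have Var_mult_Var: "Var p * Var q = (Ax A i j * Ax A k l :: 'k mpoly)"
    using ones by (simp add: Ax_def ij kl)
  show ?thesis
  proof
    assume in_I2: "(Var p * Var q :: 'k mpoly) \<in> I2 m n A"
    show "isolated_pair A p q"
    proof (rule ccontr)
      assume "\<not> isolated_pair A p q"
      then have rectangle: "{i, k} \<times> {j, l} \<subseteq> {(a, c). A a c}"
        using ones by (auto simp: isolated_pair_def ij kl)
      have "eval_indicator ({i, k} \<times> {j, l}) (Var p * Var q :: 'k mpoly) = 0"
        using eval_indicator_minors2_rectangle[OF rectangle] in_I2 unfolding I2_def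
        by (rule eval_indicator_ideal_gen_in)
      then show False
        by (simp add: eval_indicator_mult eval_indicator_Var ij kl)
    qed
  next
    assume "isolated_pair A p q"
    then have no_rectangle: "\<not> (A i l \<and> A k j)" and "i \<noteq> k" "j \<noteq> l"
      using ones by (auto simp: isolated_pair_def ij kl)
    from no_rectangle have "Ax A i l * Ax A k j = (0 :: 'k mpoly)"
      by (auto simp: Ax_def)
    moreover have "(Ax A i j * Ax A k l - Ax A i l * Ax A k j :: 'k mpoly) \<in> I2 m n A"
      using \<open>i \<noteq> k\<close> \<open>j \<noteq> l\<close> bounds by (rule minor_in_I2)
    ultimately show "(Var p * Var q :: 'k mpoly) \<in> I2 m n A"
      by (simp add: Var_mult_Var)
  qed
qed

lemma isolated_set_iff_pairwise:
  assumes "S \<subseteq> ones m n A"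
  shows "isolated_set m n A S \<longleftrightarrow> (\<forall>p\<in>S. \<forall>q\<in>S. p \<noteq> q \<longrightarrow> isolated_pair A p q)"
proof -
  have "finite S" using assms finite_ones by (rule finite_subset)
  then show ?thesis
    using assms by (auto simp: isolated_set_def card_le_Suc0_iff_eq)
qed

theorem corollary4p15:
  fixes A :: "nat \<Rightarrow> nat \<Rightarrow> bool" and m n :: nat
  shows "(SR_ideal m n A :: 'k::field mpoly set) =
    ideal_gen_in (kA m n A)
      {Var p * Var q | p q. p \<noteq> q \<and> p \<in> ones m n A \<and> q \<in> ones m n A \<and>
          (Var p * Var q :: 'k mpoly) \<notin> I2 m n A}"
proof -
  have generators: "{Var p * Var q | p q. p \<noteq> q \<and> p \<in> ones m n A \<and> q \<in> ones m n A \<and>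
          (Var p * Var q :: 'k mpoly) \<notin> I2 m n A} =
        {Var p * Var q | p q. p \<noteq> q \<and> p \<in> ones m n A \<and> q \<in> ones m n A \<and>
          \<not> isolated_pair A p q}"
    using Var_mult_Var_in_I2_iff by blast
  show ?thesis
    unfolding SR_ideal_def generators
    by (rule ideal_gen_in_nonfaces_flag_complex
        [OF subsemiring_kA finite_ones Var_in_kA isolated_set_iff_pairwise])
qed

end
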